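(* Let $S$ be a memory system satisfying the Causality, Data Independence, Processor Symmetry and Location Symmetry assumptions, and let $n,m\ge1$. Suppose there is a simple witness $\Omega$ for $S(n,m)$ such that for every unambiguous trace $\tau$ of $S(n,m)$ and every $1\le k\le\min\{n,m\}$, the graph $G(\Omega)(\tau)$ does not have a canonical $k$-nice cycle. Then every trace of $S(n,m)$ is sequentially consistent.
   Context: Notation: $\mathbb{N}_n=\{1,\dots,n\}$, $\mathbb{W}_n=\{0,\dots,n\}$, $\mathbb{W}=\{0,1,2,\dots\}$. Memory events $E(n,m,v)=\{R,W\}\times\mathbb{N}_n\times\mathbb{N}_m\times\mathbb{W}_v$; for $e=\langle a,b,c,d\rangle$, $op(e)=a$, $proc(e)=b$, $loc(e)=c$, $data(e)=d$; $0$ models the initial value of every location. A memory system is a family $S=(S(n,m,v))_{n,m,v\ge1}$, $S(n,m,v)$ a regular set of finite runs over an alphabet $E^a(n,m,v)\supseteq E(n,m,v)$ (other letters are internal events); $S(n,m)=\bigcup_{v\ge1}S(n,m,v)$. The trace of a run is its subsequence of memory events; traces of $S(n,m,v)$ (resp. $S(n,m)$) are traces of its runs. For a sequence $\tau$ of memory events with positions $1,\dots,|\tau|$: $P(\tau,i)=\{k: proc(\tau(k))=i\}$, $L(\tau,j)=\{k: loc(\tau(k))=j\}$, $L^w(\tau,j)$, $L^r(\tau,j)$ the write/read positions in $L(\tau,j)$, $M(\tau,i)=\{\langle u,v\rangle: u,v\in P(\tau,i), u<v\}$. $\tau$ is unambiguous if for every $j$ and $x\in L^w(\tau,j)$, $data(\tau(x))\ne0$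 and $data(\tau(x))\ne data(\tau(y))$ for all $y\in L^w(\tau,j)\setminus\{x\}$. Assumptions. Causality: for all $n,m,v$, every trace $\tau$ of $S(n,m,v)$, every $j$ and $x\in L^r(\tau,j)$, either $data(\tau(x))=0$ or some $y\in L^w(\tau,j)$ has $data(\tau(y))=data(\tau(x))$. Data Independence: with renaming functions $\lambda:\mathbb{N}_m\times\mathbb{W}\to\mathbb{W}$, $\lambda(j,0)=0$, and $\lambda^d(\langle a,b,c,d\rangle)=\langle a,b,c,\lambda(c,d)\rangle$ letterwise, for all $n,m,v$ and $\tau\in E(n,m,v)^*$: $\tau$ is a trace of $S(n,m,v)$ iff $\tau=\lambda^d(\tau')$ for some unambiguous trace $\tau'$ of $S(n,m)$ and renaming function $\lambda$ with values in $\mathbb{W}_v$. Processor Symmetry: for all $n,m,v$, every permutation $\lambda$ of $\mathbb{N}_n$ and trace $\tau$ of $S(n,m,v)$, $\lambda^p(\tau)$ is a trace of $S(n,m,v)$, where $\lambda^p(\langle a,b,c,d\rangle)=\langle a,\lambda(b),c,d\rangle$ letterwise. Location Symmetry: likewise for permutations $\lambda$ of $\mathbb{N}_m$ and $\lambda^l(\langle a,b,c,d\rangle)=\langle a,b,\lambda(c),d\rangle$. Sequential consistency: $\tau$ is serial if for every position $u$, with $upto(\tau,u)=\{k\le u: op(\tau(k))=W, loc(\tau(k))=loc(\tau(u))\}$, $data(\tau(u))=0$ when $upto(\tau,u)=\emptyset$, else $data(\tau(u))=data(\tau(\max upto(\tau,u)))$. $\tau$ is sequentially consistent if some permutation $f$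 of $\mathbb{N}_{|\tau|}$ satisfies (C1) $\langle u,v\rangle\in M(\tau,i)$ implies $f(u)<f(v)$, and (C2) $\tau_{f^{-1}(1)}\cdots\tau_{f^{-1}(|\tau|)}$ is serial. Witnesses: a witness $\Omega$ for $S(n,m)$ assigns to each trace $\tau$ and location $j$ a strict total order $\Omega(\tau,j)$ on $L^w(\tau,j)$; it is simple if $\langle x,y\rangle\in\Omega(\tau,j)$ iff $x<y$. For unambiguous $\tau$: $\langle x,y\rangle\in\Omega^e(\tau,j)$ (for $x,y\in L(\tau,j)$) iff (1) $data(\tau(x))=data(\tau(y))$, $op(\tau(x))=W$, $op(\tau(y))=R$; or (2) $data(\tau(x))=0\ne data(\tau(y))$; or (3) some $a,b\in L^w(\tau,j)$ have $\langle a,b\rangle\in\Omega(\tau,j)$, $data(\tau(a))=data(\tau(x))$, $data(\tau(b))=data(\tau(y))$. $G(\Omega)(\tau)$ is the directed graph on $\{1,\dots,|\tau|\}$ with edges $\bigcup_iM(\tau,i)\cup\bigcup_j\Omega^e(\tau,j)$. For $k\ge1$, $x\oplus1=x+1$ for $x<k$ and $k\oplus1=1$. A canonical $k$-nice cycle in $G(\Omega)(\tau)$ is a sequence $u_1,v_1,\dots,u_k,v_k$ of pairwise distinct vertices with $\langle u_x,v_x\rangle\in M(\tau,x)$ and $\langle v_x,u_{x\oplus1}\rangle\in\Omega^e(\tau,x\oplus1)$ for all $1\le x\le k$. *)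

theory Defs
  imports Main
begin

datatype mop = Rd | Wr

type_synonym event = "mop \<times> nat \<times> nat \<times> nat"

definition ev_op :: "event \<Rightarrow> mop" where "ev_op e = fst e"
definition ev_proc :: "event \<Rightarrow> nat" where "ev_proc e = fst (snd e)"
definition ev_loc :: "event \<Rightarrow> nat" where "ev_loc e = fst (snd (snd e))"
definition ev_data :: "event \<Rightarrow> nat" where "ev_data e = snd (snd (snd e))"

definition Ev :: "nat \<Rightarrow> nat \<Rightarrow> nat \<Rightarrow> event set" where
  "Ev n m v = {e. ev_proc e \<in> {1..n} \<and> ev_loc e \<in> {1..m} \<and> ev_data e \<le> v}"

datatype 'i letter = Mem event | Internal 'i

definition regular_on :: "'a set \<Rightarrow> 'a list set \<Rightarrow> bool" where
  "regular_on \<Sigma> L \<longleftrightarrow>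
     (\<exists>(Q::nat set) q0 \<delta> F. finite Q \<and> q0 \<in> Q \<and> F \<subseteq> Q \<and>
        (\<forall>q\<in>Q. \<forall>a\<in>\<Sigma>. \<delta> q a \<in> Q) \<and>
        L = {w \<in> lists \<Sigma>. fold (%a q. \<delta> q a) w q0 \<in> F})"

definition alphabet :: "(nat \<Rightarrow> nat \<Rightarrow> nat \<Rightarrow> 'i set) \<Rightarrow> nat \<Rightarrow> nat \<Rightarrow> nat \<Rightarrow> 'i letter set" where
  "alphabet I n m v = Mem ` Ev n m v \<union> Internal ` I n m v"

definition memory_system ::
  "(nat \<Rightarrow> nat \<Rightarrow> nat \<Rightarrow> 'i set) \<Rightarrow> (nat \<Rightarrow> nat \<Rightarrow> nat \<Rightarrow> 'i letter list set) \<Rightarrow> bool" where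
  "memory_system I S \<longleftrightarrow>
     (\<forall>n m v. n \<ge> 1 \<longrightarrow> m \<ge> 1 \<longrightarrow> v \<ge> 1 \<longrightarrow>
        finite (I n m v) \<and> S n m v \<subseteq> lists (alphabet I n m v) \<and>
        regular_on (alphabet I n m v) (S n m v))"

fun mem_events :: "'i letter list \<Rightarrow> event list" where
  "mem_events [] = []"
| "mem_events (Mem e # r) = e # mem_events r"
| "mem_events (Internal _ # r) = mem_events r"

definition traces :: "(nat \<Rightarrow> nat \<Rightarrow> nat \<Rightarrow> 'i letter list set) \<Rightarrow> nat \<Rightarrow> nat \<Rightarrow> nat \<Rightarrow> event list set" where
  "traces S n m v = mem_events ` S n m v"

definition traces_nm :: "(nat \<Rightarrow> nat \<Rightarrow> nat \<Rightarrow> 'i letter list set) \<Rightarrow> nat \<Rightarrow> nat \<Rightarrow> event list set" where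
  "traces_nm S n m = (\<Union>v\<in>{1..}. traces S n m v)"

section \<open>Position sets (positions are 0-based list indices)\<close>

definition Pp :: "event list \<Rightarrow> nat \<Rightarrow> nat set" where
  "Pp \<tau> i = {k. k < length \<tau> \<and> ev_proc (\<tau> ! k) = i}"
definition Lp :: "event list \<Rightarrow> nat \<Rightarrow> nat set" where
  "Lp \<tau> j = {k. k < length \<tau> \<and> ev_loc (\<tau> ! k) = j}"
definition Lw :: "event list \<Rightarrow> nat \<Rightarrow> nat set" where
  "Lw \<tau> j = {k \<in> Lp \<tau> j. ev_op (\<tau> ! k) = Wr}"
definition Lr :: "event list \<Rightarrow> nat \<Rightarrow> nat set" where
  "Lr \<tau> j = {k \<in> Lp \<tau> j. ev_op (\<tau> ! k) = Rd}"
definition Mp :: "event list \<Rightarrow> nat \<Rightarrow> (nat \<times> nat) set" where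
  "Mp \<tau> i = {(u, v). u \<in> Pp \<tau> i \<and> v \<in> Pp \<tau> i \<and> u < v}"

definition unambiguous :: "event list \<Rightarrow> bool" where
  "unambiguous \<tau> \<longleftrightarrow>
     (\<forall>j. \<forall>x\<in>Lw \<tau> j. ev_data (\<tau> ! x) \<noteq> 0 \<and>
        (\<forall>y\<in>Lw \<tau> j - {x}. ev_data (\<tau> ! x) \<noteq> ev_data (\<tau> ! y)))"

definition causality :: "(nat \<Rightarrow> nat \<Rightarrow> nat \<Rightarrow> 'i letter list set) \<Rightarrow> bool" where
  "causality S \<longleftrightarrow>
     (\<forall>n m v. n \<ge> 1 \<longrightarrow> m \<ge> 1 \<longrightarrow> v \<ge> 1 \<longrightarrow>
       (\<forall>\<tau>\<in>traces S n m v. \<forall>j. \<forall>x\<in>Lr \<tau> j.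
          ev_data (\<tau> ! x) = 0 \<or> (\<exists>y\<in>Lw \<tau> j. ev_data (\<tau> ! y) = ev_data (\<tau> ! x))))"

definition renaming :: "nat \<Rightarrow> nat \<Rightarrow> (nat \<Rightarrow> nat \<Rightarrow> nat) \<Rightarrow> bool" where
  "renaming m v r \<longleftrightarrow> (\<forall>j\<in>{1..m}. r j 0 = 0 \<and> (\<forall>d. r j d \<le> v))"

definition ren_data :: "(nat \<Rightarrow> nat \<Rightarrow> nat) \<Rightarrow> event \<Rightarrow> event" where
  "ren_data r e = (ev_op e, ev_proc e, ev_loc e, r (ev_loc e) (ev_data e))"

definition ren_proc :: "(nat \<Rightarrow> nat) \<Rightarrow> event \<Rightarrow> event" where
  "ren_proc r e = (ev_op e, r (ev_proc e), ev_loc e, ev_data e)"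

definition ren_loc :: "(nat \<Rightarrow> nat) \<Rightarrow> event \<Rightarrow> event" where
  "ren_loc r e = (ev_op e, ev_proc e, r (ev_loc e), ev_data e)"

definition data_independence :: "(nat \<Rightarrow> nat \<Rightarrow> nat \<Rightarrow> 'i letter list set) \<Rightarrow> bool" where
  "data_independence S \<longleftrightarrow>
     (\<forall>n m v. n \<ge> 1 \<longrightarrow> m \<ge> 1 \<longrightarrow> v \<ge> 1 \<longrightarrow>
       (\<forall>\<tau> \<in> lists (Ev n m v).
          \<tau> \<in> traces S n m v \<longleftrightarrow>
          (\<exists>\<tau>' r. \<tau>' \<in> traces_nm S n m \<and> unambiguous \<tau>' \<and> renaming m v r \<and>
                  \<tau> = map (ren_data r) \<tau>')))"

definition processor_symmetry :: "(nat \<Rightarrow> nat \<Rightarrow> nat \<Rightarrow> 'i letter list set) \<Rightarrow> bool" where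
  "processor_symmetry S \<longleftrightarrow>
     (\<forall>n m v. n \<ge> 1 \<longrightarrow> m \<ge> 1 \<longrightarrow> v \<ge> 1 \<longrightarrow>
       (\<forall>r \<tau>. bij_betw r {1..n} {1..n} \<longrightarrow> \<tau> \<in> traces S n m v \<longrightarrow>
          map (ren_proc r) \<tau> \<in> traces S n m v))"

definition location_symmetry :: "(nat \<Rightarrow> nat \<Rightarrow> nat \<Rightarrow> 'i letter list set) \<Rightarrow> bool" where
  "location_symmetry S \<longleftrightarrow>
     (\<forall>n m v. n \<ge> 1 \<longrightarrow> m \<ge> 1 \<longrightarrow> v \<ge> 1 \<longrightarrow>
       (\<forall>r \<tau>. bij_betw r {1..m} {1..m} \<longrightarrow> \<tau> \<in> traces S n m v \<longrightarrow>
          map (ren_loc r) \<tau> \<in> traces S n m v))"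

definition upto_set :: "event list \<Rightarrow> nat \<Rightarrow> nat set" where
  "upto_set \<tau> u = {k. k \<le> u \<and> ev_op (\<tau> ! k) = Wr \<and> ev_loc (\<tau> ! k) = ev_loc (\<tau> ! u)}"

definition serial :: "event list \<Rightarrow> bool" where
  "serial \<tau> \<longleftrightarrow>
     (\<forall>u < length \<tau>.
        (upto_set \<tau> u = {} \<longrightarrow> ev_data (\<tau> ! u) = 0) \<and>
        (upto_set \<tau> u \<noteq> {} \<longrightarrow> ev_data (\<tau> ! u) = ev_data (\<tau> ! Max (upto_set \<tau> u))))"

definition seq_consistent :: "event list \<Rightarrow> bool" where
  "seq_consistent \<tau> \<longleftrightarrow>
     (\<exists>f. bij_betw f {0..<length \<tau>} {0..<length \<tau>} \<and>
          (\<forall>i u v. (u, v) \<in> Mp \<tau> i \<longrightarrow> f u < f v) \<and>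
          serial (map (\<lambda>p. \<tau> ! the_inv_into {0..<length \<tau>} f p) [0..<length \<tau>]))"

definition witness ::
  "(nat \<Rightarrow> nat \<Rightarrow> nat \<Rightarrow> 'i letter list set) \<Rightarrow> nat \<Rightarrow> nat \<Rightarrow> (event list \<Rightarrow> nat \<Rightarrow> (nat \<times> nat) set) \<Rightarrow> bool" where
  "witness S n m \<Omega> \<longleftrightarrow>
     (\<forall>\<tau>\<in>traces_nm S n m. \<forall>j\<in>{1..m}.
        \<Omega> \<tau> j \<subseteq> Lw \<tau> j \<times> Lw \<tau> j \<and> irrefl (\<Omega> \<tau> j) \<and> trans (\<Omega> \<tau> j) \<and>
        total_on (Lw \<tau> j) (\<Omega> \<tau> j))"

definition simple_witness ::
  "(nat \<Rightarrow> nat \<Rightarrow> nat \<Rightarrow> 'i letter list set) \<Rightarrow> nat \<Rightarrow> nat \<Rightarrow> (event list \<Rightarrow> nat \<Rightarrow> (nat \<times> nat) set) \<Rightarrow> bool" where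
  "simple_witness S n m \<Omega> \<longleftrightarrow> witness S n m \<Omega> \<and>
     (\<forall>\<tau>\<in>traces_nm S n m. \<forall>j\<in>{1..m}. \<forall>x\<in>Lw \<tau> j. \<forall>y\<in>Lw \<tau> j.
        (x, y) \<in> \<Omega> \<tau> j \<longleftrightarrow> x < y)"

definition Omega_e :: "(event list \<Rightarrow> nat \<Rightarrow> (nat \<times> nat) set) \<Rightarrow> event list \<Rightarrow> nat \<Rightarrow> (nat \<times> nat) set" where
  "Omega_e \<Omega> \<tau> j = {(x, y). x \<in> Lp \<tau> j \<and> y \<in> Lp \<tau> j \<and>
     ((ev_data (\<tau> ! x) = ev_data (\<tau> ! y) \<and> ev_op (\<tau> ! x) = Wr \<and> ev_op (\<tau> ! y) = Rd) \<or>
      (ev_data (\<tau> ! x) = 0 \<and> ev_data (\<tau> ! y) \<noteq> 0) \<or>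
      (\<exists>a\<in>Lw \<tau> j. \<exists>b\<in>Lw \<tau> j. (a, b) \<in> \<Omega> \<tau> j \<and>
          ev_data (\<tau> ! a) = ev_data (\<tau> ! x) \<and> ev_data (\<tau> ! b) = ev_data (\<tau> ! y)))}"

definition G_edges :: "(event list \<Rightarrow> nat \<Rightarrow> (nat \<times> nat) set) \<Rightarrow> event list \<Rightarrow> (nat \<times> nat) set" where
  "G_edges \<Omega> \<tau> = (\<Union>i. Mp \<tau> i) \<union> (\<Union>j. Omega_e \<Omega> \<tau> j)"

definition succ_mod :: "nat \<Rightarrow> nat \<Rightarrow> nat" where
  "succ_mod k x = (if x < k then x + 1 else 1)"

definition canonical_nice_cycle ::
  "(event list \<Rightarrow> nat \<Rightarrow> (nat \<times> nat) set) \<Rightarrow> event list \<Rightarrow> nat \<Rightarrow> (nat \<Rightarrow> nat) \<Rightarrow> (nat \<Rightarrow> nat) \<Rightarrow> bool" where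
  "canonical_nice_cycle \<Omega> \<tau> k u v \<longleftrightarrow>
     inj_on u {1..k} \<and> inj_on v {1..k} \<and> u ` {1..k} \<inter> v ` {1..k} = {} \<and>
     (\<forall>x\<in>{1..k}. (u x, v x) \<in> Mp \<tau> x \<and> (v x, u (succ_mod k x)) \<in> Omega_e \<Omega> \<tau> (succ_mod k x))"

definition has_canonical_nice_cycle ::
  "(event list \<Rightarrow> nat \<Rightarrow> (nat \<times> nat) set) \<Rightarrow> event list \<Rightarrow> nat \<Rightarrow> bool" where
  "has_canonical_nice_cycle \<Omega> \<tau> k \<longleftrightarrow> (\<exists>u v. canonical_nice_cycle \<Omega> \<tau> k u v)"

end

theory Submission
  imports Defs "HOL-Combinatorics.Permutations"
begin

(* For an unambiguous trace every read names the write it reads from, and a simple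
   witness turns the edges of Omega_e at location j into the order of a "coherence key": reads of
   the initial value first, then every write followed by the reads of its value.  So G(Omega)(tau)
   is program order together with these location orders.  If it is acyclic, a topological sort is
   a serialization, and tau is sequentially consistent; by data independence every trace is a
   data renaming of such a trace, and renaming values preserves seriality.
   A cycle, on the other hand, can be coloured by the processor or location whose relation each
   edge uses.  All these relations are Ferrers relations, so two edges of one colour can be
   short-cut; in a shortest cycle the colours are therefore distinct and alternate between
   processors and locations, which is a k-nice cycle with k <= min n m.  Renaming processors and
   locations (symmetry) makes it canonical, contradicting the hypothesis. *)

section \<open>Cycles coloured by Ferrers relations\<close>

definition ferrers :: "'a rel \<Rightarrow> bool" where
  "ferrers R \<longleftrightarrow> (\<forall>a b c d. (a, b) \<in> R \<longrightarrow> (c, d) \<in> R \<longrightarrow> (a, d) \<in> R \<or> (c, b) \<in> R)"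

lemma ferrers_less_on: "ferrers {(a, b). a \<in> A \<and> b \<in> A \<and> f a < (f b :: 'b::linorder)}"
  unfolding ferrers_def by auto

definition colored_cycle :: "('c \<Rightarrow> 'a rel) \<Rightarrow> nat \<Rightarrow> (nat \<Rightarrow> 'a) \<Rightarrow> (nat \<Rightarrow> 'c) \<Rightarrow> bool" where
  "colored_cycle R N x c \<longleftrightarrow> 0 < N \<and> (\<forall>i<N. (x i, x (Suc i mod N)) \<in> R (c i))"

lemma colored_cycle_rotate:
  assumes "colored_cycle R N x c"
  shows "colored_cycle R N (\<lambda>i. x ((i + r) mod N)) (\<lambda>i. c ((i + r) mod N))"
  unfolding colored_cycle_def
proof (intro conjI allI impI)
  show "0 < N" using assms by (simp add: colored_cycle_def)
  fix i assume "i < N"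
  have "(x ((i + r) mod N), x (Suc ((i + r) mod N) mod N)) \<in> R (c ((i + r) mod N))"
    using assms by (simp add: colored_cycle_def)
  then show "(x ((i + r) mod N), x ((Suc i mod N + r) mod N)) \<in> R (c ((i + r) mod N))"
    by (simp add: mod_Suc_eq mod_add_left_eq)
qed

lemma colored_cycle_close_prefix:
  assumes "colored_cycle R N x c" "0 < M" "M \<le> N" "(x (M - 1), x 0) \<in> R (c (M - 1))"
  shows "colored_cycle R M x c"
  unfolding colored_cycle_def
proof (intro conjI allI impI)
  fix i assume "i < M"
  show "(x i, x (Suc i mod M)) \<in> R (c i)"
  proof (cases "Suc i < M")
    case True
    then show ?thesis using assms(1,3) by (auto simp: colored_cycle_def dest: spec[of _ i])
  next
    case False
    then have "i = M - 1" using \<open>i < M\<close> by simp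
    then show ?thesis using assms(2,4) by simp
  qed
qed (use assms in simp)

lemma colored_cycle_shortcut:
  assumes cyc: "colored_cycle R N x c" and ij: "i < j" "j < N" and "c i = c j"
    and "ferrers (R (c i))"
  obtains M y d where "M < N" "colored_cycle R M y d"
proof -
  have N: "Suc i mod N = Suc i" using ij by simp
  have "(x i, x (Suc i)) \<in> R (c i)" "(x j, x (Suc j mod N)) \<in> R (c i)"
    using cyc ij \<open>c i = c j\<close> N unfolding colored_cycle_def by (metis less_trans)+
  then consider "(x i, x (Suc j mod N)) \<in> R (c i)" | "(x j, x (Suc i)) \<in> R (c i)"
    using \<open>ferrers (R (c i))\<close> unfolding ferrers_def by blast
  \<comment> \<open>the first edge skips the edges i+1..j, the second closes a cycle on them alone\<close>
  then show thesis
  proof cases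
    case 1
    have "N - (j - i) - 1 + Suc j = i + N" using ij by linarith
    then have "(N - (j - i) - 1 + Suc j) mod N = i" using ij by simp
    then have "colored_cycle R (N - (j - i)) (\<lambda>t. x ((t + Suc j) mod N)) (\<lambda>t. c ((t + Suc j) mod N))"
      using 1 ij by (intro colored_cycle_close_prefix[OF colored_cycle_rotate[OF cyc]]) simp_all
    moreover have "N - (j - i) < N" using ij by simp
    ultimately show thesis using that by blast
  next
    case 2
    have "(j - i - 1 + Suc i) mod N = j" "Suc i mod N = Suc i" using ij by simp_all
    then have "colored_cycle R (j - i) (\<lambda>t. x ((t + Suc i) mod N)) (\<lambda>t. c ((t + Suc i) mod N))"
      using 2 ij \<open>c i = c j\<close>
      by (intro colored_cycle_close_prefix[OF colored_cycle_rotate[OF cyc]]) simp_all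
    moreover have "j - i < N" using ij by simp
    ultimately show thesis using that by blast
  qed
qed

lemma colored_cycle_injective_colors:
  assumes "colored_cycle R N x c" and "\<And>d. ferrers (R d)"
  obtains M y d where "colored_cycle R M y d" "inj_on d {..<M}"
  using assms(1)
proof (induction N arbitrary: x c thesis rule: less_induct)
  case (less N)
  show ?case
  proof (cases "inj_on c {..<N}")
    case True
    then show ?thesis using less.prems by blast
  next
    case False
    then obtain i j where "i < j" "j < N" "c i = c j"
      unfolding inj_on_def by (metis lessThan_iff linorder_neqE_nat)
    then obtain M y d where "M < N" "colored_cycle R M y d"
      using colored_cycle_shortcut[OF less.prems(2)] assms(2) by metis
    then show ?thesis using less.IH less.prems(1) by blast
  qed
qed

lemma colored_cycle_of_not_acyclic:
  assumes "\<not> acyclic (\<Union>d. R d)"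
  obtains N x c where "colored_cycle R N x c"
proof -
  obtain z where "(z, z) \<in> (\<Union>d. R d)\<^sup>+" using assms unfolding acyclic_def by blast
  then obtain N where "0 < N" "(z, z) \<in> (\<Union>d. R d) ^^ N" unfolding trancl_power by blast
  from this(2) obtain x where x: "x 0 = z" "x N = z" "\<forall>i<N. (x i, x (Suc i)) \<in> (\<Union>d. R d)"
    unfolding relpow_fun_conv by blast
  define c where "c i = (SOME d. (x i, x (Suc i)) \<in> R d)" for i
  have edge: "(x i, x (Suc i)) \<in> R (c i)" if i: "i < N" for i
  proof -
    obtain d where "(x i, x (Suc i)) \<in> R d" using x(3) i by blast
    then show ?thesis unfolding c_def by (rule someI)
  qed
  have "(x i, x (Suc i mod N)) \<in> R (c i)" if "i < N" for i
  proof (cases "Suc i = N")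
    case True
    then show ?thesis using edge[OF that] x(1,2) by simp
  next
    case False
    then show ?thesis using edge[OF that] that by simp
  qed
  then have "colored_cycle R N x c"
    using \<open>0 < N\<close> by (simp add: colored_cycle_def)
  then show thesis by (rule that)
qed

lemma inj_on_add_mod: "inj_on (\<lambda>i. (i + r) mod N) {..<(N::nat)}"
proof (rule linorder_inj_onI')
  fix i j assume "i \<in> {..<N}" "j \<in> {..<N}" "i < j"
  then have "\<not> N dvd j - i" by (auto dest: dvd_imp_le)
  then show "(i + r) mod N \<noteq> (j + r) mod N"
    using mod_eq_dvd_iff_nat[of "i + r" "j + r" N] \<open>i < j\<close> by simp
qed

lemma colored_cycle_alternates:
  assumes cyc: "colored_cycle (case_sum P L) N x c" and inj: "inj_on c {..<N}"
    and P: "\<And>i a b. (a, b) \<in> P i \<Longrightarrow> p a = i \<and> p b = i"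
    and L: "\<And>j a b. (a, b) \<in> L j \<Longrightarrow> l a = j \<and> l b = j"
    and irrefl: "\<And>i a. (a, a) \<notin> P i" "\<And>j a. (a, a) \<notin> L j"
    and "i < N"
  shows "isl (c (Suc i mod N)) \<longleftrightarrow> \<not> isl (c i)"
proof -
  let ?j = "Suc i mod N"
  have edges: "(x i, x ?j) \<in> case_sum P L (c i)" "(x ?j, x (Suc ?j mod N)) \<in> case_sum P L (c ?j)"
    using cyc \<open>i < N\<close> by (simp_all add: colored_cycle_def)
  have "N \<noteq> 1"
  proof
    assume "N = 1"
    then have "x ?j = x i" using \<open>i < N\<close> by simp
    then show False using edges(1) irrefl by (cases "c i") auto
  qed
  then have "?j \<noteq> i" using \<open>i < N\<close> by (simp add: mod_Suc)
  then have "c i \<noteq> c ?j" using inj \<open>i < N\<close> by (auto dest: inj_onD)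
  moreover have "c i = c ?j" if "isl (c i) \<longleftrightarrow> isl (c ?j)"
  proof (cases "c i")
    case (Inl a)
    with that obtain b where b: "c ?j = Inl b" by (cases "c ?j") auto
    then have "(x i, x ?j) \<in> P a" "(x ?j, x (Suc ?j mod N)) \<in> P b" using edges Inl by simp_all
    then have "p (x ?j) = a" "p (x ?j) = b" using P by blast+
    then show ?thesis using Inl b by simp
  next
    case (Inr a)
    with that obtain b where b: "c ?j = Inr b" by (cases "c ?j") auto
    then have "(x i, x ?j) \<in> L a" "(x ?j, x (Suc ?j mod N)) \<in> L b" using edges Inr by simp_all
    then have "l (x ?j) = a" "l (x ?j) = b" using L by blast+
    then show ?thesis using Inr b by simp
  qed
  ultimately show ?thesis by blast
qed

lemma alternating_cycle_parity:
  fixes b :: "nat \<Rightarrow> bool"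
  assumes "0 < N" and alt: "\<And>i. i < N \<Longrightarrow> b (Suc i mod N) \<longleftrightarrow> \<not> b i" and "b 0"
  shows "even N \<and> (\<forall>i<N. b i \<longleftrightarrow> even i)"
proof -
  have parity: "b i \<longleftrightarrow> even i" if "i < N" for i
    using that
  proof (induction i)
    case (Suc i)
    then show ?case using alt[of i] by simp
  qed (use \<open>b 0\<close> in simp)
  moreover have "even N"
    using alt[of "N - 1"] parity[of "N - 1"] \<open>b 0\<close> \<open>0 < N\<close> by (cases N) auto
  ultimately show ?thesis by blast
qed

lemma nice_cycle_of_colored_cycle:
  assumes cyc: "colored_cycle (case_sum P L) N x c" and inj: "inj_on c {..<N}" and "isl (c 0)"
    and P: "\<And>i a b. (a, b) \<in> P i \<Longrightarrow> p a = i \<and> p b = i"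
    and L: "\<And>j a b. (a, b) \<in> L j \<Longrightarrow> l a = j \<and> l b = j"
    and irrefl: "\<And>i a. (a, a) \<notin> P i" "\<And>j a. (a, a) \<notin> L j"
  obtains k u v where "0 < k" "inj_on (\<lambda>y. p (u y)) {1..k}" "inj_on (\<lambda>y. l (v y)) {1..k}"
    "\<And>y. y \<in> {1..k} \<Longrightarrow> (u y, v y) \<in> P (p (u y))"
    "\<And>y. y \<in> {1..k} \<Longrightarrow> (v y, u (succ_mod k y)) \<in> L (l (v y))"
proof -
  have alt: "isl (c (Suc i mod N)) \<longleftrightarrow> \<not> isl (c i)" if "i < N" for i
    using colored_cycle_alternates[OF cyc inj P L irrefl that] .
  have "0 < N" using cyc by (simp add: colored_cycle_def)
  have "even N" and parity: "\<And>i. i < N \<Longrightarrow> isl (c i) \<longleftrightarrow> even i"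
    using alternating_cycle_parity[where b = "\<lambda>i. isl (c i)", OF \<open>0 < N\<close> alt \<open>isl (c 0)\<close>] by auto
  \<comment> \<open>colours alternate starting with a processor, so edge 2y-2 is the y-th program-order edge
    and edge 2y-1 the y-th location edge\<close>
  define k where "k = N div 2"
  define u where "u y = x (2 * y - 2)" for y
  define v where "v y = x (2 * y - 1)" for y
  have N: "N = 2 * k" "0 < k" using \<open>even N\<close> \<open>0 < N\<close> by (auto simp: k_def)
  have edge: "(x i, x (Suc i mod N)) \<in> case_sum P L (c i)" if "i < N" for i
    using cyc that by (simp add: colored_cycle_def)
  have P_edge: "c (2 * y - 2) = Inl (p (u y)) \<and> (u y, v y) \<in> P (p (u y))" if y: "y \<in> {1..k}" for y
  proof -
    have i: "2 * y - 2 < N" "Suc (2 * y - 2) mod N = 2 * y - 1" using y N by auto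
    obtain a where a: "c (2 * y - 2) = Inl a"
      using parity[OF i(1)] y by (cases "c (2 * y - 2)") auto
    then have "(u y, v y) \<in> P a" using edge[OF i(1)] i(2) by (simp add: u_def v_def)
    then show ?thesis using a P by blast
  qed
  have L_edge: "c (2 * y - 1) = Inr (l (v y)) \<and> (v y, u (succ_mod k y)) \<in> L (l (v y))"
    if y: "y \<in> {1..k}" for y
  proof -
    have i: "2 * y - 1 < N" "x (Suc (2 * y - 1) mod N) = u (succ_mod k y)"
      using y N by (auto simp: u_def succ_mod_def)
    obtain b where b: "c (2 * y - 1) = Inr b"
      using parity[OF i(1)] y by (cases "c (2 * y - 1)") auto
    then have "(v y, u (succ_mod k y)) \<in> L b" using edge[OF i(1)] i(2) by (simp add: v_def)
    then show ?thesis using b L by blast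
  qed
  have index_eq: "y = y'"
    if "y \<in> {1..k}" "y' \<in> {1..k}" "d \<in> {1, 2}" "c (2 * y - d) = c (2 * y' - d)" for y y' d
  proof -
    have "2 * y - d < N" "2 * y' - d < N" using that(1-3) N by auto
    then have "2 * y - d = 2 * y' - d" using inj that(4) by (auto dest: inj_onD)
    then show "y = y'" using that(1-3) by auto
  qed
  have "inj_on (\<lambda>y. p (u y)) {1..k}"
  proof (rule inj_onI)
    fix y y' assume y: "y \<in> {1..k}" "y' \<in> {1..k}" and "p (u y) = p (u y')"
    then have "c (2 * y - 2) = c (2 * y' - 2)" using P_edge by simp
    then show "y = y'" using index_eq[of y y' 2] y by simp
  qed
  moreover have "inj_on (\<lambda>y. l (v y)) {1..k}"
  proof (rule inj_onI)
    fix y y' assume y: "y \<in> {1..k}" "y' \<in> {1..k}" and "l (v y) = l (v y')"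
    then have "c (2 * y - 1) = c (2 * y' - 1)" using L_edge by simp
    then show "y = y'" using index_eq[of y y' 1] y by simp
  qed
  ultimately show thesis using that N(2) P_edge L_edge by blast
qed

lemma nice_cycle_of_not_acyclic:
  assumes "\<not> acyclic ((\<Union>i. P i) \<union> (\<Union>j. L j))"
    and ferrers: "\<And>i. ferrers (P i)" "\<And>j. ferrers (L j)"
    and P: "\<And>i a b. (a, b) \<in> P i \<Longrightarrow> p a = i \<and> p b = i"
    and L: "\<And>j a b. (a, b) \<in> L j \<Longrightarrow> l a = j \<and> l b = j"
    and irrefl: "\<And>i a. (a, a) \<notin> P i" "\<And>j a. (a, a) \<notin> L j"
  obtains k u v where "0 < k" "inj_on (\<lambda>y. p (u y)) {1..k}" "inj_on (\<lambda>y. l (v y)) {1..k}"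
    "\<And>y. y \<in> {1..k} \<Longrightarrow> (u y, v y) \<in> P (p (u y))"
    "\<And>y. y \<in> {1..k} \<Longrightarrow> (v y, u (succ_mod k y)) \<in> L (l (v y))"
proof -
  have "(\<Union>d. case_sum P L d) = (\<Union>i. P i) \<union> (\<Union>j. L j)"
    by (simp add: UNIV_sum UN_Un image_image)
  then have "\<not> acyclic (\<Union>d. case_sum P L d)" using assms(1) by simp
  then obtain N0 x0 c0 where "colored_cycle (case_sum P L) N0 x0 c0"
    by (rule colored_cycle_of_not_acyclic)
  moreover have "ferrers (case_sum P L d)" for d using ferrers by (cases d) simp_all
  ultimately obtain N x c where cyc: "colored_cycle (case_sum P L) N x c" and inj: "inj_on c {..<N}"
    by (rule colored_cycle_injective_colors)
  show thesis
  proof (cases "isl (c 0)")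
    case True
    then show ?thesis by (rule nice_cycle_of_colored_cycle[OF cyc inj _ P L irrefl that])
  next
    case False
    have "0 < N" using cyc by (simp add: colored_cycle_def)
    let ?c = "\<lambda>i. c ((i + 1) mod N)"
    have "inj_on ?c {..<N}"
    proof -
      have "(\<lambda>i. (i + 1) mod N) ` {..<N} \<subseteq> {..<N}" using \<open>0 < N\<close> by auto
      then show ?thesis
        using comp_inj_on[OF inj_on_add_mod[of 1 N] inj_on_subset[OF inj]] by (simp add: comp_def)
    qed
    moreover have "isl (?c 0)" using colored_cycle_alternates[OF cyc inj P L irrefl \<open>0 < N\<close>] False by simp
    ultimately show ?thesis
      by (rule nice_cycle_of_colored_cycle[OF colored_cycle_rotate[OF cyc, of 1] _ _ P L irrefl that])
  qed
qed

lemma ev_ren_simps [simp]: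
  "ev_op (ren_data r e) = ev_op e" "ev_proc (ren_data r e) = ev_proc e"
  "ev_loc (ren_data r e) = ev_loc e" "ev_data (ren_data r e) = r (ev_loc e) (ev_data e)"
  "ev_op (ren_proc p e) = ev_op e" "ev_proc (ren_proc p e) = p (ev_proc e)"
  "ev_loc (ren_proc p e) = ev_loc e" "ev_data (ren_proc p e) = ev_data e"
  "ev_op (ren_loc l e) = ev_op e" "ev_proc (ren_loc l e) = ev_proc e"
  "ev_loc (ren_loc l e) = l (ev_loc e)" "ev_data (ren_loc l e) = ev_data e"
  by (simp_all add: ren_data_def ren_proc_def ren_loc_def ev_op_def ev_proc_def ev_loc_def ev_data_def)

definition causal :: "event list \<Rightarrow> bool" where
  "causal \<tau> \<longleftrightarrow> (\<forall>j. \<forall>x\<in>Lr \<tau> j.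
     ev_data (\<tau> ! x) = 0 \<or> (\<exists>y\<in>Lw \<tau> j. ev_data (\<tau> ! y) = ev_data (\<tau> ! x)))"

lemma trace_events:
  assumes "memory_system I S" "1 \<le> n" "1 \<le> m" "1 \<le> v" "\<tau> \<in> traces S n m v"
  shows "set \<tau> \<subseteq> Ev n m v"
proof -
  obtain r where r: "r \<in> S n m v" "\<tau> = mem_events r" using assms(5) by (auto simp: traces_def)
  have "r \<in> lists (alphabet I n m v)" using assms(1-4) r(1) unfolding memory_system_def by blast
  then show ?thesis unfolding r(2)
    by (induction r rule: mem_events.induct) (auto simp: alphabet_def)
qed

lemma causal_trace:
  "causality S \<Longrightarrow> 1 \<le> n \<Longrightarrow> 1 \<le> m \<Longrightarrow> 1 \<le> v \<Longrightarrow> \<tau> \<in> traces S n m v \<Longrightarrow> causal \<tau>"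
  unfolding causality_def causal_def by blast

lemma data_independenceE:
  assumes "memory_system I S" "data_independence S" "1 \<le> n" "1 \<le> m" "1 \<le> v"
    and "\<tau> \<in> traces S n m v"
  obtains \<tau>' r where "\<tau>' \<in> traces_nm S n m" "unambiguous \<tau>'" "renaming m v r"
    "\<tau> = map (ren_data r) \<tau>'"
proof -
  have "\<tau> \<in> lists (Ev n m v)" using trace_events[OF assms(1,3-6)] by blast
  then show thesis
    using assms(2)[unfolded data_independence_def, rule_format, OF assms(3-5)] assms(6) that by blast
qed

section \<open>The coherence key\<close>

definition write_rank :: "event list \<Rightarrow> nat \<Rightarrow> nat" where
  "write_rank \<tau> x = (if ev_data (\<tau> ! x) = 0 then 0 else
     Suc (THE w. w \<in> Lw \<tau> (ev_loc (\<tau> ! x)) \<and> ev_data (\<tau> ! w) = ev_data (\<tau> ! x)))"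

text \<open>Reads of the initial value get key 1, a write at position w gets 2w + 2 and the reads
  of its value 2w + 3 (for unambiguous, causal traces), so sorting the events at one location by
  key gives a serial order.\<close>

definition coherence_key :: "event list \<Rightarrow> nat \<Rightarrow> nat" where
  "coherence_key \<tau> x = 2 * write_rank \<tau> x + (if ev_op (\<tau> ! x) = Wr then 0 else 1)"

definition loc_order :: "event list \<Rightarrow> nat \<Rightarrow> (nat \<times> nat) set" where
  "loc_order \<tau> j = {(x, y). x \<in> Lp \<tau> j \<and> y \<in> Lp \<tau> j \<and> coherence_key \<tau> x < coherence_key \<tau> y}"

lemma unambiguous_write_nonzero: "unambiguous \<tau> \<Longrightarrow> w \<in> Lw \<tau> j \<Longrightarrow> ev_data (\<tau> ! w) \<noteq> 0"
  unfolding unambiguous_def by blast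

lemma unambiguous_write_unique:
  "unambiguous \<tau> \<Longrightarrow> w \<in> Lw \<tau> j \<Longrightarrow> w' \<in> Lw \<tau> j \<Longrightarrow> ev_data (\<tau> ! w) = ev_data (\<tau> ! w') \<Longrightarrow> w = w'"
  unfolding unambiguous_def by blast

lemma causal_source_write:
  assumes "causal \<tau>" "x \<in> Lp \<tau> j" "ev_data (\<tau> ! x) \<noteq> 0"
  obtains w where "w \<in> Lw \<tau> j" "ev_data (\<tau> ! w) = ev_data (\<tau> ! x)"
proof (cases "ev_op (\<tau> ! x)")
  case Rd
  then have "x \<in> Lr \<tau> j" using assms(2) by (simp add: Lr_def)
  then have "\<exists>w\<in>Lw \<tau> j. ev_data (\<tau> ! w) = ev_data (\<tau> ! x)"
    using assms(1,3) unfolding causal_def by metis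
  then show thesis using that by blast
next
  case Wr
  then show thesis using assms(2) that unfolding Lw_def by blast
qed

lemma write_rank_source:
  assumes "unambiguous \<tau>" "w \<in> Lw \<tau> (ev_loc (\<tau> ! x))" "ev_data (\<tau> ! w) = ev_data (\<tau> ! x)"
  shows "write_rank \<tau> x = Suc w"
proof -
  have "(THE w. w \<in> Lw \<tau> (ev_loc (\<tau> ! x)) \<and> ev_data (\<tau> ! w) = ev_data (\<tau> ! x)) = w"
    using assms unambiguous_write_unique[OF assms(1)] by (intro the_equality) auto
  then show ?thesis
    using assms unambiguous_write_nonzero[OF assms(1,2)] by (simp add: write_rank_def)
qed

lemma coherence_key_write:
  assumes "unambiguous \<tau>" "w \<in> Lw \<tau> j"
  shows "coherence_key \<tau> w = 2 * Suc w"
proof -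
  have "w \<in> Lw \<tau> (ev_loc (\<tau> ! w))" "ev_op (\<tau> ! w) = Wr"
    using assms(2) by (auto simp: Lw_def Lp_def)
  then show ?thesis using write_rank_source[OF assms(1)] by (simp add: coherence_key_def)
qed

lemma write_rank_cases:
  assumes U: "unambiguous \<tau>" and C: "causal \<tau>" and x: "x \<in> Lp \<tau> j"
  obtains (init) "ev_data (\<tau> ! x) = 0" "write_rank \<tau> x = 0"
    | (source) w where "w \<in> Lw \<tau> j" "ev_data (\<tau> ! w) = ev_data (\<tau> ! x)" "write_rank \<tau> x = Suc w"
proof (cases "ev_data (\<tau> ! x) = 0")
  case True
  then show thesis using init by (simp add: write_rank_def)
next
  case False
  then obtain w where "w \<in> Lw \<tau> j" "ev_data (\<tau> ! w) = ev_data (\<tau> ! x)"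
    using causal_source_write[OF C x] by blast
  moreover have "ev_loc (\<tau> ! x) = j" using x by (simp add: Lp_def)
  ultimately show thesis using source write_rank_source[OF U] by simp
qed

lemma write_rank_eq_iff:
  assumes U: "unambiguous \<tau>" and C: "causal \<tau>" and "x \<in> Lp \<tau> j" "y \<in> Lp \<tau> j"
  shows "write_rank \<tau> x = write_rank \<tau> y \<longleftrightarrow> ev_data (\<tau> ! x) = ev_data (\<tau> ! y)"
  by (rule write_rank_cases[OF U C assms(3)]; rule write_rank_cases[OF U C assms(4)])
    (auto dest: unambiguous_write_nonzero[OF U] unambiguous_write_unique[OF U])

lemma write_rank_less_iff:
  assumes U: "unambiguous \<tau>" and C: "causal \<tau>" and x: "x \<in> Lp \<tau> j" and y: "y \<in> Lp \<tau> j"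
  shows "write_rank \<tau> x < write_rank \<tau> y \<longleftrightarrow>
    (ev_data (\<tau> ! x) = 0 \<and> ev_data (\<tau> ! y) \<noteq> 0) \<or>
    (\<exists>a\<in>Lw \<tau> j. \<exists>b\<in>Lw \<tau> j. a < b \<and>
       ev_data (\<tau> ! a) = ev_data (\<tau> ! x) \<and> ev_data (\<tau> ! b) = ev_data (\<tau> ! y))"
  using U C x
proof (cases rule: write_rank_cases)
  case init
  with U C y show ?thesis by (cases rule: write_rank_cases) (auto dest: unambiguous_write_nonzero[OF U])
next
  case (source w)
  note wx = this
  from U C y show ?thesis
  proof (cases rule: write_rank_cases)
    case init
    then show ?thesis using wx by (auto dest: unambiguous_write_nonzero[OF U])
  next
    case (source w')
    have ab: "a = w \<and> b = w'" if "a \<in> Lw \<tau> j" "b \<in> Lw \<tau> j"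
      "ev_data (\<tau> ! a) = ev_data (\<tau> ! x)" "ev_data (\<tau> ! b) = ev_data (\<tau> ! y)" for a b
      using unambiguous_write_unique[OF U that(1) wx(1)] unambiguous_write_unique[OF U that(2) source(1)]
        that(3,4) wx(2) source(2) by simp
    have "(\<exists>a\<in>Lw \<tau> j. \<exists>b\<in>Lw \<tau> j. a < b \<and>
       ev_data (\<tau> ! a) = ev_data (\<tau> ! x) \<and> ev_data (\<tau> ! b) = ev_data (\<tau> ! y)) \<longleftrightarrow> w < w'"
    proof
      assume "\<exists>a\<in>Lw \<tau> j. \<exists>b\<in>Lw \<tau> j. a < b \<and>
        ev_data (\<tau> ! a) = ev_data (\<tau> ! x) \<and> ev_data (\<tau> ! b) = ev_data (\<tau> ! y)"
      then obtain a b where "a \<in> Lw \<tau> j" "b \<in> Lw \<tau> j" "a < b"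
        "ev_data (\<tau> ! a) = ev_data (\<tau> ! x)" "ev_data (\<tau> ! b) = ev_data (\<tau> ! y)" by blast
      then show "w < w'" using ab by blast
    next
      assume "w < w'"
      then show "\<exists>a\<in>Lw \<tau> j. \<exists>b\<in>Lw \<tau> j. a < b \<and>
        ev_data (\<tau> ! a) = ev_data (\<tau> ! x) \<and> ev_data (\<tau> ! b) = ev_data (\<tau> ! y)"
        using wx(1,2) source(1,2) by blast
    qed
    moreover have "ev_data (\<tau> ! x) \<noteq> 0" using unambiguous_write_nonzero[OF U wx(1)] wx(2) by simp
    ultimately show ?thesis using wx(3) source(3) by simp
  qed
qed

lemma coherence_key_less_iff:
  "coherence_key \<tau> x < coherence_key \<tau> y \<longleftrightarrow> write_rank \<tau> x < write_rank \<tau> y \<or>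
     (write_rank \<tau> x = write_rank \<tau> y \<and> ev_op (\<tau> ! x) = Wr \<and> ev_op (\<tau> ! y) = Rd)"
  by (cases "ev_op (\<tau> ! x)"; cases "ev_op (\<tau> ! y)") (auto simp: coherence_key_def)

lemma Omega_e_simple_witness:
  assumes U: "unambiguous \<tau>" and C: "causal \<tau>"
    and simple: "\<forall>a\<in>Lw \<tau> j. \<forall>b\<in>Lw \<tau> j. (a, b) \<in> \<Omega> \<tau> j \<longleftrightarrow> a < b"
  shows "Omega_e \<Omega> \<tau> j = loc_order \<tau> j"
proof -
  have "(x, y) \<in> Omega_e \<Omega> \<tau> j \<longleftrightarrow> coherence_key \<tau> x < coherence_key \<tau> y"
    if x: "x \<in> Lp \<tau> j" and y: "y \<in> Lp \<tau> j" for x y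
  proof -
    have "(\<exists>a\<in>Lw \<tau> j. \<exists>b\<in>Lw \<tau> j. (a, b) \<in> \<Omega> \<tau> j \<and>
        ev_data (\<tau> ! a) = ev_data (\<tau> ! x) \<and> ev_data (\<tau> ! b) = ev_data (\<tau> ! y)) \<longleftrightarrow>
      (\<exists>a\<in>Lw \<tau> j. \<exists>b\<in>Lw \<tau> j. a < b \<and>
        ev_data (\<tau> ! a) = ev_data (\<tau> ! x) \<and> ev_data (\<tau> ! b) = ev_data (\<tau> ! y))"
      using simple by blast
    then show ?thesis
      unfolding coherence_key_less_iff write_rank_eq_iff[OF U C x y] write_rank_less_iff[OF U C x y]
      using x y by (auto simp: Omega_e_def)
  qed
  moreover have "x \<in> Lp \<tau> j \<and> y \<in> Lp \<tau> j" if "(x, y) \<in> Omega_e \<Omega> \<tau> j" for x y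
    using that by (simp add: Omega_e_def)
  ultimately show ?thesis unfolding loc_order_def by blast
qed

text \<open>For a simple witness \<Omega> this is G(\<Omega>)(\<tau>), see Omega_e_simple_witness.\<close>

definition trace_graph :: "event list \<Rightarrow> (nat \<times> nat) set" where
  "trace_graph \<tau> = (\<Union>i. Mp \<tau> i) \<union> (\<Union>j. loc_order \<tau> j)"

section \<open>Serializations\<close>

lemma acyclic_height:
  assumes "finite E" "acyclic E"
  obtains h :: "'a \<Rightarrow> nat" where "\<And>a b. (a, b) \<in> E \<Longrightarrow> h a < h b"
proof
  fix a b assume ab: "(a, b) \<in> E"
  have "{c. (c, a) \<in> E\<^sup>+} \<subset> {c. (c, b) \<in> E\<^sup>+}"
    using ab \<open>acyclic E\<close> by (auto intro: trancl_into_trancl simp: acyclic_def)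
  moreover have "finite {c. (c, b) \<in> E\<^sup>+}"
    using \<open>finite E\<close> by (intro finite_subset[OF _ finite_Domain[of "E\<^sup>+"]]) (auto dest: tranclD)
  ultimately show "card {c. (c, a) \<in> E\<^sup>+} < card {c. (c, b) \<in> E\<^sup>+}"
    by (rule psubset_card_mono[rotated])
qed

definition topological_order :: "(nat \<Rightarrow> nat) \<Rightarrow> nat \<Rightarrow> (nat \<times> nat) set \<Rightarrow> bool" where
  "topological_order g L E \<longleftrightarrow>
     bij_betw g {0..<L} {0..<L} \<and> (\<forall>p<L. \<forall>q<L. (g p, g q) \<in> E \<longrightarrow> p < q)"

lemma topological_order_mono: "topological_order g L E \<Longrightarrow> E' \<subseteq> E \<Longrightarrow> topological_order g L E'"
  unfolding topological_order_def by blast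

lemma acyclic_topological_order:
  assumes "acyclic E" "E \<subseteq> {0..<L} \<times> {0..<L}"
  obtains g where "topological_order g L E"
proof -
  have "finite E" using assms(2) by (rule finite_subset) simp
  then obtain h :: "nat \<Rightarrow> nat" where h: "\<And>a b. (a, b) \<in> E \<Longrightarrow> h a < h b"
    using acyclic_height assms(1) by blast
  define xs where "xs = sort_key h [0..<L]"
  have "bij_betw ((!) xs) {0..<L} {0..<L}"
    by (rule bij_betw_nth) (simp_all add: xs_def atLeast0LessThan)
  moreover have "p < q" if "p < L" "q < L" "(xs ! p, xs ! q) \<in> E" for p q
  proof (rule ccontr)
    assume "\<not> p < q"
    then have "h (xs ! q) \<le> h (xs ! p)"
      using sorted_nth_mono[OF sorted_sort_key[of h "[0..<L]"], of q p] that by (simp add: xs_def)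
    then show False using h[OF that(3)] by simp
  qed
  ultimately show thesis using that unfolding topological_order_def by blast
qed

lemma serialI:
  assumes "\<And>u. u < length \<sigma> \<Longrightarrow> ev_op (\<sigma> ! u) = Rd \<Longrightarrow>
      (upto_set \<sigma> u = {} \<and> ev_data (\<sigma> ! u) = 0) \<or>
      (\<exists>k\<in>upto_set \<sigma> u. (\<forall>k'\<in>upto_set \<sigma> u. k' \<le> k) \<and> ev_data (\<sigma> ! k) = ev_data (\<sigma> ! u))"
  shows "serial \<sigma>"
  unfolding serial_def
proof (intro allI impI)
  fix u assume u: "u < length \<sigma>"
  have fin: "finite (upto_set \<sigma> u)" by (rule finite_subset[of _ "{..u}"]) (auto simp: upto_set_def)
  show "(upto_set \<sigma> u = {} \<longrightarrow> ev_data (\<sigma> ! u) = 0) \<and>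
     (upto_set \<sigma> u \<noteq> {} \<longrightarrow> ev_data (\<sigma> ! u) = ev_data (\<sigma> ! Max (upto_set \<sigma> u)))"
  proof (cases "ev_op (\<sigma> ! u)")
    case Wr
    then have "u \<in> upto_set \<sigma> u" "\<forall>k\<in>upto_set \<sigma> u. k \<le> u" by (auto simp: upto_set_def)
    then have "Max (upto_set \<sigma> u) = u" using Max_eqI[OF fin] by blast
    then show ?thesis using \<open>u \<in> upto_set \<sigma> u\<close> by auto
  next
    case Rd
    from assms[OF u Rd] show ?thesis
    proof
      assume "\<exists>k\<in>upto_set \<sigma> u. (\<forall>k'\<in>upto_set \<sigma> u. k' \<le> k) \<and> ev_data (\<sigma> ! k) = ev_data (\<sigma> ! u)"
      then obtain k where "k \<in> upto_set \<sigma> u" "\<forall>k'\<in>upto_set \<sigma> u. k' \<le> k" "ev_data (\<sigma> ! k) = ev_data (\<sigma> ! u)"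
        by blast
      moreover from this have "Max (upto_set \<sigma> u) = k" using Max_eqI[OF fin] by blast
      ultimately show ?thesis by auto
    qed simp
  qed
qed

lemma upto_set_arrangement:
  assumes "\<And>p. p < length \<tau> \<Longrightarrow> g p < length \<tau>" and "u < length \<tau>"
  shows "upto_set (map (\<lambda>p. \<tau> ! g p) [0..<length \<tau>]) u =
    {k. k \<le> u \<and> g k \<in> Lw \<tau> (ev_loc (\<tau> ! g u))}"
proof -
  have "k \<in> upto_set (map (\<lambda>p. \<tau> ! g p) [0..<length \<tau>]) u \<longleftrightarrow>
      k \<le> u \<and> g k \<in> Lw \<tau> (ev_loc (\<tau> ! g u))" for k
  proof (cases "k \<le> u")
    case True
    then have "k < length \<tau>" "g k < length \<tau>" using assms by auto
    then show ?thesis using True assms(2) by (auto simp: upto_set_def Lw_def Lp_def)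
  qed (simp add: upto_set_def)
  then show ?thesis by blast
qed

lemma topological_order_key_less:
  assumes "topological_order g (length \<tau>) (loc_order \<tau> j)" "p < length \<tau>" "q < length \<tau>"
    "g p \<in> Lp \<tau> j" "g q \<in> Lp \<tau> j" "coherence_key \<tau> (g p) < coherence_key \<tau> (g q)"
  shows "p < q"
proof -
  have "(g p, g q) \<in> loc_order \<tau> j" using assms(4-6) by (simp add: loc_order_def)
  then show ?thesis using assms(1-3) unfolding topological_order_def by blast
qed

lemma topological_order_initial_read:
  assumes U: "unambiguous \<tau>" and T: "topological_order g (length \<tau>) (loc_order \<tau> j)"
    and u: "u < length \<tau>" "g u \<in> Lp \<tau> j" "coherence_key \<tau> (g u) = 1" and "k \<le> u"
  shows "g k \<notin> Lw \<tau> j"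
proof
  assume "g k \<in> Lw \<tau> j"
  then have "g k \<in> Lp \<tau> j" "coherence_key \<tau> (g k) = 2 * Suc (g k)"
    using coherence_key_write[OF U] by (auto simp: Lw_def)
  then have "u < k" using topological_order_key_less[OF T u(1) _ u(2)] u(3) \<open>k \<le> u\<close> u(1) by simp
  then show False using \<open>k \<le> u\<close> by simp
qed

lemma topological_order_source_read:
  assumes U: "unambiguous \<tau>" and T: "topological_order g (length \<tau>) (loc_order \<tau> j)"
    and u: "u < length \<tau>" "g u \<in> Lp \<tau> j" and q: "q < length \<tau>" "g q \<in> Lw \<tau> j"
    and key: "coherence_key \<tau> (g u) = 2 * Suc (g q) + 1"
  shows "q < u" and "k \<le> u \<Longrightarrow> g k \<in> Lw \<tau> j \<Longrightarrow> k \<le> q"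
proof -
  have write_key: "g k \<in> Lp \<tau> j" "coherence_key \<tau> (g k) = 2 * Suc (g k)" if "g k \<in> Lw \<tau> j" for k
    using coherence_key_write[OF U that] that by (simp_all add: Lw_def)
  show "q < u" using topological_order_key_less[OF T q(1) u(1) write_key(1)[OF q(2)] u(2)] write_key(2)[OF q(2)] key
    by simp
  assume k: "k \<le> u" "g k \<in> Lw \<tau> j"
  then have "k < length \<tau>" using u(1) by simp
  have "\<not> g q < g k"
    using topological_order_key_less[OF T u(1) \<open>k < length \<tau>\<close> u(2) write_key(1)[OF k(2)]] write_key(2)[OF k(2)]
      key k(1) by auto
  moreover have "k < q" if "g k < g q"
    using topological_order_key_less[OF T \<open>k < length \<tau>\<close> q(1) write_key(1)[OF k(2)] write_key(1)[OF q(2)]]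
      write_key(2)[OF k(2)] write_key(2)[OF q(2)] that by simp
  moreover have "k = q" if "g k = g q"
    using T \<open>k < length \<tau>\<close> q(1) that by (auto simp: topological_order_def bij_betw_def dest: inj_onD)
  ultimately show "k \<le> q" by linarith
qed

lemma serial_of_topological_order:
  assumes U: "unambiguous \<tau>" and C: "causal \<tau>"
    and T: "\<And>j. topological_order g (length \<tau>) (loc_order \<tau> j)"
  shows "serial (map (\<lambda>p. \<tau> ! g p) [0..<length \<tau>])" (is "serial ?\<sigma>")
proof (rule serialI)
  let ?L = "length \<tau>"
  have g: "bij_betw g {0..<?L} {0..<?L}" using T[of 0] by (simp add: topological_order_def)
  then have g_range: "g p < ?L" if "p < ?L" for p using that by (auto simp: bij_betw_def)
  fix u assume "u < length ?\<sigma>" and "ev_op (?\<sigma> ! u) = Rd"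
  then have u: "u < ?L" and rd: "ev_op (\<tau> ! g u) = Rd" by simp_all
  define j where "j = ev_loc (\<tau> ! g u)"
  have z: "g u \<in> Lp \<tau> j" using g_range[OF u] by (simp add: Lp_def j_def)
  have upto: "upto_set ?\<sigma> u = {k. k \<le> u \<and> g k \<in> Lw \<tau> j}"
    unfolding j_def using g_range u by (rule upto_set_arrangement)
  show "(upto_set ?\<sigma> u = {} \<and> ev_data (?\<sigma> ! u) = 0) \<or>
    (\<exists>k\<in>upto_set ?\<sigma> u. (\<forall>k'\<in>upto_set ?\<sigma> u. k' \<le> k) \<and> ev_data (?\<sigma> ! k) = ev_data (?\<sigma> ! u))"
    using U C z
  proof (cases rule: write_rank_cases)
    case init
    then have "coherence_key \<tau> (g u) = 1" using rd by (simp add: coherence_key_def)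
    then have "upto_set ?\<sigma> u = {}"
      unfolding upto using topological_order_initial_read[OF U T u z] by blast
    then show ?thesis using init u by simp
  next
    case (source w)
    have "w \<in> g ` {0..<?L}" using g source(1) by (simp add: bij_betw_def Lw_def Lp_def)
    then obtain q where q: "q < ?L" "g q = w" by auto
    have key: "coherence_key \<tau> (g u) = 2 * Suc (g q) + 1"
      using source(3) rd q(2) by (simp add: coherence_key_def)
    note last_write = topological_order_source_read[OF U T u z q(1) _ key]
    have "\<forall>k\<in>upto_set ?\<sigma> u. k \<le> q" unfolding upto using last_write(2) q(2) source(1) by blast
    moreover have "q \<in> upto_set ?\<sigma> u" unfolding upto using last_write(1) q(2) source(1) by simp
    moreover have "ev_data (?\<sigma> ! q) = ev_data (?\<sigma> ! u)" using q u source(2) by simp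
    ultimately show ?thesis by blast
  qed
qed

lemma seq_consistentI:
  assumes T: "topological_order g (length \<tau>) (\<Union>i. Mp \<tau> i)"
    and serial: "serial (map (\<lambda>p. \<tau> ! g p) [0..<length \<tau>])"
  shows "seq_consistent \<tau>"
proof -
  let ?A = "{0..<length \<tau>}"
  have g: "bij_betw g ?A ?A"
    and po: "\<And>p q i. p < length \<tau> \<Longrightarrow> q < length \<tau> \<Longrightarrow> (g p, g q) \<in> Mp \<tau> i \<Longrightarrow> p < q"
    using T unfolding topological_order_def by auto
  define f where "f = the_inv_into ?A g"
  have f: "bij_betw f ?A ?A" unfolding f_def by (rule bij_betw_the_inv_into[OF g])
  have g_f: "g (f a) = a" if "a \<in> ?A" for a
    using g that unfolding f_def by (auto simp: bij_betw_def intro: f_the_inv_into_f)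
  have respects_po: "f u < f v" if uv: "(u, v) \<in> Mp \<tau> i" for i u v
  proof -
    have "u \<in> ?A" "v \<in> ?A" using uv by (auto simp: Mp_def Pp_def)
    then have "f u < length \<tau>" "f v < length \<tau>" "(g (f u), g (f v)) \<in> Mp \<tau> i"
      using f g_f uv by (auto simp: bij_betw_def)
    then show ?thesis by (rule po)
  qed
  have "the_inv_into ?A f p = g p" if "p \<in> ?A" for p
  proof (rule the_inv_into_f_eq[OF bij_betw_imp_inj_on[OF f]])
    show "f (g p) = p" using g that unfolding f_def by (simp add: bij_betw_def the_inv_into_f_f)
    show "g p \<in> ?A" using g that by (auto simp: bij_betw_def)
  qed
  then have eq: "map (\<lambda>p. \<tau> ! the_inv_into ?A f p) [0..<length \<tau>] = map (\<lambda>p. \<tau> ! g p) [0..<length \<tau>]"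
    by simp
  have "serial (map (\<lambda>p. \<tau> ! the_inv_into ?A f p) [0..<length \<tau>])" unfolding eq by (rule serial)
  then show ?thesis unfolding seq_consistent_def using f respects_po by blast
qed

lemma seq_consistent_of_acyclic:
  assumes U: "unambiguous \<tau>" and C: "causal \<tau>" and "acyclic (trace_graph \<tau>)"
  shows "seq_consistent \<tau>"
proof -
  have "trace_graph \<tau> \<subseteq> {0..<length \<tau>} \<times> {0..<length \<tau>}"
    by (auto simp: trace_graph_def Mp_def Pp_def loc_order_def Lp_def)
  with assms(3) obtain g where T: "topological_order g (length \<tau>) (trace_graph \<tau>)"
    by (rule acyclic_topological_order)
  show ?thesis
  proof (rule seq_consistentI)
    show "topological_order g (length \<tau>) (\<Union>i. Mp \<tau> i)"
      using T by (rule topological_order_mono) (simp add: trace_graph_def)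
    have "topological_order g (length \<tau>) (loc_order \<tau> j)" for j
      using T by (rule topological_order_mono) (auto simp: trace_graph_def)
    then show "serial (map (\<lambda>p. \<tau> ! g p) [0..<length \<tau>])"
      by (rule serial_of_topological_order[OF U C])
  qed
qed

lemma serial_ren_data:
  assumes "serial \<sigma>" and "\<forall>e\<in>set \<sigma>. r (ev_loc e) 0 = 0"
  shows "serial (map (ren_data r) \<sigma>)"
  unfolding serial_def
proof (intro allI impI)
  fix u assume "u < length (map (ren_data r) \<sigma>)"
  then have u: "u < length \<sigma>" by simp
  have up: "upto_set (map (ren_data r) \<sigma>) u = upto_set \<sigma> u"
    using u by (auto simp: upto_set_def)
  have s: "(upto_set \<sigma> u = {} \<longrightarrow> ev_data (\<sigma> ! u) = 0) \<and>
      (upto_set \<sigma> u \<noteq> {} \<longrightarrow> ev_data (\<sigma> ! u) = ev_data (\<sigma> ! Max (upto_set \<sigma> u)))"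
    using assms(1) u unfolding serial_def by blast
  show "(upto_set (map (ren_data r) \<sigma>) u = {} \<longrightarrow> ev_data (map (ren_data r) \<sigma> ! u) = 0) \<and>
      (upto_set (map (ren_data r) \<sigma>) u \<noteq> {} \<longrightarrow>
       ev_data (map (ren_data r) \<sigma> ! u) =
       ev_data (map (ren_data r) \<sigma> ! Max (upto_set (map (ren_data r) \<sigma>) u)))"
    unfolding up
  proof (intro conjI impI)
    assume "upto_set \<sigma> u = {}"
    then show "ev_data (map (ren_data r) \<sigma> ! u) = 0" using s u assms(2) by simp
  next
    assume ne: "upto_set \<sigma> u \<noteq> {}"
    let ?M = "Max (upto_set \<sigma> u)"
    have "finite (upto_set \<sigma> u)" by (rule finite_subset[of _ "{..u}"]) (auto simp: upto_set_def)
    then have "?M \<le> u" "ev_loc (\<sigma> ! ?M) = ev_loc (\<sigma> ! u)"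
      using Max_in[OF _ ne] by (auto simp: upto_set_def)
    then show "ev_data (map (ren_data r) \<sigma> ! u) = ev_data (map (ren_data r) \<sigma> ! ?M)"
      using s ne u by simp
  qed
qed

lemma seq_consistent_ren_data:
  assumes "seq_consistent \<tau>" and "\<forall>e\<in>set \<tau>. r (ev_loc e) 0 = 0"
  shows "seq_consistent (map (ren_data r) \<tau>)"
proof -
  let ?A = "{0..<length \<tau>}"
  obtain f where f: "bij_betw f ?A ?A" and po: "\<forall>i u v. (u, v) \<in> Mp \<tau> i \<longrightarrow> f u < f v"
    and s: "serial (map (\<lambda>p. \<tau> ! the_inv_into ?A f p) [0..<length \<tau>])"
    using assms(1) unfolding seq_consistent_def by blast
  have inv_range: "the_inv_into ?A f p < length \<tau>" if "p < length \<tau>" for p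
    using bij_betw_the_inv_into[OF f] that by (auto simp: bij_betw_def)
  have eq: "map (\<lambda>p. map (ren_data r) \<tau> ! the_inv_into ?A f p) [0..<length \<tau>] =
      map (ren_data r) (map (\<lambda>p. \<tau> ! the_inv_into ?A f p) [0..<length \<tau>])"
    using inv_range by simp
  show ?thesis
    unfolding seq_consistent_def length_map
  proof (intro exI[of _ f] conjI)
    show "\<forall>i u v. (u, v) \<in> Mp (map (ren_data r) \<tau>) i \<longrightarrow> f u < f v"
      using po by (auto simp: Mp_def Pp_def)
    show "serial (map (\<lambda>p. map (ren_data r) \<tau> ! the_inv_into ?A f p) [0..<length \<tau>])"
      unfolding eq using inv_range assms(2) by (intro serial_ren_data[OF s]) auto
  qed (rule f)
qed

section \<open>Symmetry and canonical cycles\<close>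

lemma permutes_extending:
  assumes "inj_on \<alpha> K" "inj_on \<beta> K" "\<alpha> ` K \<subseteq> T" "\<beta> ` K \<subseteq> T" "finite T"
  obtains \<pi> where "\<pi> permutes T" "\<And>y. y \<in> K \<Longrightarrow> \<pi> (\<alpha> y) = \<beta> y"
proof -
  let ?A = "\<alpha> ` K" and ?B = "\<beta> ` K"
  have "card ?A = card ?B" using assms(1,2) by (simp add: card_image)
  then have "card (T - ?A) = card (T - ?B)"
    using assms(3-5) by (simp add: card_Diff_subset finite_subset)
  then obtain h where h: "bij_betw h (T - ?A) (T - ?B)"
    using assms(5) finite_same_card_bij by blast
  have g: "bij_betw (\<beta> \<circ> the_inv_into K \<alpha>) ?A ?B"
    using assms(1,2) by (intro bij_betw_trans[OF bij_betw_the_inv_into]) (simp_all add: bij_betw_def)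
  define \<pi> where "\<pi> z = (if z \<in> ?A then (\<beta> \<circ> the_inv_into K \<alpha>) z else if z \<in> T then h z else z)" for z
  have "bij_betw \<pi> ?A ?B" using g by (rule bij_betw_cong[THEN iffD1, rotated]) (simp add: \<pi>_def)
  moreover have "bij_betw \<pi> (T - ?A) (T - ?B)"
    using h by (rule bij_betw_cong[THEN iffD1, rotated]) (simp add: \<pi>_def)
  ultimately have "bij_betw \<pi> (?A \<union> (T - ?A)) (?B \<union> (T - ?B))"
    by (rule bij_betw_combine) blast
  then have "bij_betw \<pi> T T" using assms(3,4) by (simp add: Un_absorb1 Un_Diff_cancel)
  then have "\<pi> permutes T" by (rule bij_imp_permutes) (use assms(3) in \<open>auto simp: \<pi>_def\<close>)
  moreover have "\<pi> (\<alpha> y) = \<beta> y" if "y \<in> K" for y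
    using assms(1) that by (simp add: \<pi>_def the_inv_into_f_f)
  ultimately show thesis by (rule that)
qed

definition relabel :: "(nat \<Rightarrow> nat) \<Rightarrow> (nat \<Rightarrow> nat) \<Rightarrow> event list \<Rightarrow> event list" where
  "relabel \<pi>p \<pi>l \<tau> = map (ren_loc \<pi>l) (map (ren_proc \<pi>p) \<tau>)"

lemma length_relabel [simp]: "length (relabel \<pi>p \<pi>l \<tau>) = length \<tau>"
  by (simp add: relabel_def)

lemma nth_relabel [simp]:
  "x < length \<tau> \<Longrightarrow> relabel \<pi>p \<pi>l \<tau> ! x = ren_loc \<pi>l (ren_proc \<pi>p (\<tau> ! x))"
  by (simp add: relabel_def)

lemma relabel_trace:
  assumes "processor_symmetry S" "location_symmetry S" "1 \<le> n" "1 \<le> m" "1 \<le> v"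
    and "\<pi>p permutes {1..n}" "\<pi>l permutes {1..m}" "\<tau> \<in> traces S n m v"
  shows "relabel \<pi>p \<pi>l \<tau> \<in> traces S n m v"
proof -
  have "map (ren_proc \<pi>p) \<tau> \<in> traces S n m v"
    using assms(1,3-5,8) permutes_imp_bij[OF assms(6)] unfolding processor_symmetry_def by blast
  then show ?thesis
    using assms(2-5) permutes_imp_bij[OF assms(7)] unfolding location_symmetry_def relabel_def by blast
qed

lemma Mp_relabel: "inj \<pi>p \<Longrightarrow> Mp (relabel \<pi>p \<pi>l \<tau>) (\<pi>p i) = Mp \<tau> i"
  by (auto simp: Mp_def Pp_def inj_eq)

lemma Lp_relabel: "inj \<pi>l \<Longrightarrow> Lp (relabel \<pi>p \<pi>l \<tau>) (\<pi>l j) = Lp \<tau> j"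
  by (auto simp: Lp_def inj_eq)

lemma Lw_relabel: "inj \<pi>l \<Longrightarrow> Lw (relabel \<pi>p \<pi>l \<tau>) (\<pi>l j) = Lw \<tau> j"
  by (auto simp: Lw_def Lp_relabel) (auto simp: Lp_def)

lemma unambiguous_iff:
  "unambiguous \<tau> \<longleftrightarrow> (\<forall>x<length \<tau>. \<forall>y<length \<tau>.
     ev_op (\<tau> ! x) = Wr \<longrightarrow> ev_op (\<tau> ! y) = Wr \<longrightarrow> ev_loc (\<tau> ! x) = ev_loc (\<tau> ! y) \<longrightarrow>
     ev_data (\<tau> ! x) \<noteq> 0 \<and> (x \<noteq> y \<longrightarrow> ev_data (\<tau> ! x) \<noteq> ev_data (\<tau> ! y)))"
  unfolding unambiguous_def Lw_def Lp_def by auto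

lemma unambiguous_relabel: "inj \<pi>l \<Longrightarrow> unambiguous \<tau> \<Longrightarrow> unambiguous (relabel \<pi>p \<pi>l \<tau>)"
  unfolding unambiguous_iff by (simp add: inj_eq)

lemma coherence_key_relabel:
  assumes "inj \<pi>l" "x < length \<tau>"
  shows "coherence_key (relabel \<pi>p \<pi>l \<tau>) x = coherence_key \<tau> x"
proof -
  have "w \<in> Lw (relabel \<pi>p \<pi>l \<tau>) (\<pi>l (ev_loc (\<tau> ! x))) \<and>
      ev_data (relabel \<pi>p \<pi>l \<tau> ! w) = ev_data (\<tau> ! x) \<longleftrightarrow>
    w \<in> Lw \<tau> (ev_loc (\<tau> ! x)) \<and> ev_data (\<tau> ! w) = ev_data (\<tau> ! x)" for w
    by (auto simp: Lw_relabel[OF assms(1)] Lw_def Lp_def inj_eq[OF assms(1)])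
  then show ?thesis using assms(2) by (simp add: coherence_key_def write_rank_def)
qed

lemma loc_order_relabel:
  assumes "inj \<pi>l"
  shows "loc_order (relabel \<pi>p \<pi>l \<tau>) (\<pi>l j) = loc_order \<tau> j"
proof -
  have "coherence_key (relabel \<pi>p \<pi>l \<tau>) x = coherence_key \<tau> x" if "x \<in> Lp \<tau> j" for x
    using coherence_key_relabel[OF assms] that by (simp add: Lp_def)
  then show ?thesis by (auto simp: loc_order_def Lp_relabel[OF assms])
qed

lemma nice_cycle_of_trace_cycle:
  assumes "\<not> acyclic (trace_graph \<tau>)"
  obtains k u v where "0 < k"
    "inj_on (\<lambda>y. ev_proc (\<tau> ! u y)) {1..k}" "inj_on (\<lambda>y. ev_loc (\<tau> ! v y)) {1..k}"
    "\<And>y. y \<in> {1..k} \<Longrightarrow> (u y, v y) \<in> Mp \<tau> (ev_proc (\<tau> ! u y))"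
    "\<And>y. y \<in> {1..k} \<Longrightarrow> (v y, u (succ_mod k y)) \<in> loc_order \<tau> (ev_loc (\<tau> ! v y))"
proof (rule nice_cycle_of_not_acyclic[of "Mp \<tau>" "loc_order \<tau>" "\<lambda>a. ev_proc (\<tau> ! a)" "\<lambda>a. ev_loc (\<tau> ! a)"])
  show "\<not> acyclic ((\<Union>i. Mp \<tau> i) \<union> (\<Union>j. loc_order \<tau> j))"
    using assms by (simp add: trace_graph_def)
  show "ferrers (Mp \<tau> i)" for i
    using ferrers_less_on[of "Pp \<tau> i" "\<lambda>x. x"] by (simp add: Mp_def)
  show "ferrers (loc_order \<tau> j)" for j
    unfolding loc_order_def by (rule ferrers_less_on)
  show "ev_proc (\<tau> ! a) = i \<and> ev_proc (\<tau> ! b) = i" if "(a, b) \<in> Mp \<tau> i" for i a b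
    using that by (simp add: Mp_def Pp_def)
  show "ev_loc (\<tau> ! a) = j \<and> ev_loc (\<tau> ! b) = j" if "(a, b) \<in> loc_order \<tau> j" for j a b
    using that by (simp add: loc_order_def Lp_def)
  show "(a, a) \<notin> Mp \<tau> i" for a i by (simp add: Mp_def)
  show "(a, a) \<notin> loc_order \<tau> j" for a j by (simp add: loc_order_def)
qed (rule that)

lemma succ_mod_range: "y \<in> {1..k} \<Longrightarrow> succ_mod k y \<in> {1..k}"
  unfolding succ_mod_def by simp

lemma inj_on_succ_mod: "inj_on (succ_mod k) {1..k}"
proof (rule inj_onI)
  fix x y assume "x \<in> {1..k}" "y \<in> {1..k}" "succ_mod k x = succ_mod k y"
  then show "x = y" unfolding succ_mod_def by (cases "x < k"; cases "y < k") simp_all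
qed

lemma canonical_nice_cycle_relabel:
  assumes inj: "inj \<pi>p" "inj \<pi>l" and procs: "inj_on (\<lambda>y. ev_proc (\<tau> ! u y)) {1..k}"
    and M: "\<And>y. y \<in> {1..k} \<Longrightarrow> (u y, v y) \<in> Mp \<tau> (ev_proc (\<tau> ! u y))"
    and L: "\<And>y. y \<in> {1..k} \<Longrightarrow> (v y, u (succ_mod k y)) \<in> loc_order \<tau> (ev_loc (\<tau> ! v y))"
    and norm_p: "\<And>y. y \<in> {1..k} \<Longrightarrow> \<pi>p (ev_proc (\<tau> ! u y)) = y"
    and norm_l: "\<And>y. y \<in> {1..k} \<Longrightarrow> \<pi>l (ev_loc (\<tau> ! v y)) = succ_mod k y"
    and Oe: "\<And>j. j \<in> {1..k} \<Longrightarrow> Omega_e \<Omega> (relabel \<pi>p \<pi>l \<tau>) j = loc_order (relabel \<pi>p \<pi>l \<tau>) j"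
  shows "canonical_nice_cycle \<Omega> (relabel \<pi>p \<pi>l \<tau>) k u v"
  unfolding canonical_nice_cycle_def
proof (intro conjI ballI)
  let ?p = "\<lambda>a. ev_proc (\<tau> ! a)"
  have same_proc: "?p (v y) = ?p (u y)" "u y < v y" if "y \<in> {1..k}" for y
    using M[OF that] by (auto simp: Mp_def Pp_def)
  have proc_eq: "y = y'" if "y \<in> {1..k}" "y' \<in> {1..k}" "?p (u y) = ?p (u y')" for y y'
    using inj_onD[OF procs] that by blast
  show "inj_on u {1..k}"
  proof (rule inj_onI)
    fix y y' assume "y \<in> {1..k}" "y' \<in> {1..k}" "u y = u y'"
    then show "y = y'" using proc_eq[of y y'] by simp
  qed
  show "inj_on v {1..k}"
  proof (rule inj_onI)
    fix y y' assume y: "y \<in> {1..k}" "y' \<in> {1..k}" and "v y = v y'"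
    then have "?p (u y) = ?p (u y')" using same_proc(1)[OF y(1)] same_proc(1)[OF y(2)] by simp
    then show "y = y'" using proc_eq y by blast
  qed
  have "u y \<noteq> v y'" if y: "y \<in> {1..k}" "y' \<in> {1..k}" for y y'
  proof
    assume uv: "u y = v y'"
    then have "?p (u y) = ?p (u y')" using same_proc(1)[OF y(2)] by simp
    then have "y = y'" using proc_eq y by blast
    then show False using uv same_proc(2)[OF y(1)] by simp
  qed
  then show "u ` {1..k} \<inter> v ` {1..k} = {}" by blast
  fix y assume y: "y \<in> {1..k}"
  have "Mp (relabel \<pi>p \<pi>l \<tau>) (\<pi>p (?p (u y))) = Mp \<tau> (?p (u y))" by (rule Mp_relabel[OF inj(1)])
  then show "(u y, v y) \<in> Mp (relabel \<pi>p \<pi>l \<tau>) y" using M[OF y] norm_p[OF y] by simp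
  have "loc_order (relabel \<pi>p \<pi>l \<tau>) (\<pi>l (ev_loc (\<tau> ! v y))) = loc_order \<tau> (ev_loc (\<tau> ! v y))"
    by (rule loc_order_relabel[OF inj(2)])
  then show "(v y, u (succ_mod k y)) \<in> Omega_e \<Omega> (relabel \<pi>p \<pi>l \<tau>) (succ_mod k y)"
    using L[OF y] norm_l[OF y] Oe[OF succ_mod_range[OF y]] by simp
qed

lemma normalizing_permutations:
  assumes "inj_on \<alpha> {1..k}" "inj_on \<beta> {1..k}" "\<alpha> ` {1..k} \<subseteq> {1..n}" "\<beta> ` {1..k} \<subseteq> {1..m}"
  obtains \<pi>p \<pi>l where "k \<le> n" "k \<le> m" "\<pi>p permutes {1..n}" "\<pi>l permutes {1..m}"
    "\<And>y. y \<in> {1..k} \<Longrightarrow> \<pi>p (\<alpha> y) = y" "\<And>y. y \<in> {1..k} \<Longrightarrow> \<pi>l (\<beta> y) = succ_mod k y"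
proof -
  have "k \<le> n" using card_inj_on_le[OF assms(1,3)] by simp
  have "k \<le> m" using card_inj_on_le[OF assms(2,4)] by simp
  have "(\<lambda>y. y) ` {1..k} \<subseteq> {1..n}" using \<open>k \<le> n\<close> by auto
  then obtain \<pi>p where "\<pi>p permutes {1..n}" "\<And>y. y \<in> {1..k} \<Longrightarrow> \<pi>p (\<alpha> y) = y"
    using permutes_extending[OF assms(1) inj_on_id2 assms(3)] by blast
  moreover have "succ_mod k ` {1..k} \<subseteq> {1..m}" using \<open>k \<le> m\<close> succ_mod_range by fastforce
  then obtain \<pi>l where "\<pi>l permutes {1..m}" "\<And>y. y \<in> {1..k} \<Longrightarrow> \<pi>l (\<beta> y) = succ_mod k y"
    using permutes_extending[OF assms(2) inj_on_succ_mod assms(4)] by blast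
  ultimately show thesis using that \<open>k \<le> n\<close> \<open>k \<le> m\<close> by blast
qed

lemma trace_graph_acyclic:
  assumes MS: "memory_system I S" and CA: "causality S"
    and PS: "processor_symmetry S" and LS: "location_symmetry S"
    and n: "1 \<le> n" and m: "1 \<le> m"
    and SW: "simple_witness S n m \<Omega>"
    and NC: "\<forall>\<tau>\<in>traces_nm S n m. unambiguous \<tau> \<longrightarrow>
      (\<forall>k\<in>{1..min n m}. \<not> has_canonical_nice_cycle \<Omega> \<tau> k)"
    and tr: "\<tau> \<in> traces S n m v" and v: "1 \<le> v" and U: "unambiguous \<tau>"
  shows "acyclic (trace_graph \<tau>)"
proof (rule ccontr)
  assume "\<not> acyclic (trace_graph \<tau>)"
  then show False
  proof (rule nice_cycle_of_trace_cycle)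
    fix k u w assume "0 < k"
      and procs: "inj_on (\<lambda>y. ev_proc (\<tau> ! u y)) {1..k}" and locs: "inj_on (\<lambda>y. ev_loc (\<tau> ! w y)) {1..k}"
      and M: "\<And>y. y \<in> {1..k} \<Longrightarrow> (u y, w y) \<in> Mp \<tau> (ev_proc (\<tau> ! u y))"
      and L: "\<And>y. y \<in> {1..k} \<Longrightarrow> (w y, u (succ_mod k y)) \<in> loc_order \<tau> (ev_loc (\<tau> ! w y))"
    have events: "ev_proc (\<tau> ! i) \<in> {1..n} \<and> ev_loc (\<tau> ! i) \<in> {1..m}" if "i < length \<tau>" for i
      using trace_events[OF MS n m v tr] nth_mem[OF that] by (auto simp: Ev_def)
    have "(\<lambda>y. ev_proc (\<tau> ! u y)) ` {1..k} \<subseteq> {1..n}" "(\<lambda>y. ev_loc (\<tau> ! w y)) ` {1..k} \<subseteq> {1..m}"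
      using M L events by (auto simp: Mp_def Pp_def loc_order_def Lp_def)
    then obtain \<pi>p \<pi>l where "k \<le> n" "k \<le> m" and perm: "\<pi>p permutes {1..n}" "\<pi>l permutes {1..m}"
      and norm: "\<And>y. y \<in> {1..k} \<Longrightarrow> \<pi>p (ev_proc (\<tau> ! u y)) = y"
        "\<And>y. y \<in> {1..k} \<Longrightarrow> \<pi>l (ev_loc (\<tau> ! w y)) = succ_mod k y"
      by (rule normalizing_permutations[OF procs locs]) blast
    let ?\<tau> = "relabel \<pi>p \<pi>l \<tau>"
    have "?\<tau> \<in> traces S n m v" by (rule relabel_trace[OF PS LS n m v perm tr])
    then have tr': "?\<tau> \<in> traces_nm S n m" and C': "causal ?\<tau>"
      using v causal_trace[OF CA n m v] by (auto simp: traces_nm_def)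
    have U': "unambiguous ?\<tau>" by (rule unambiguous_relabel[OF permutes_inj[OF perm(2)] U])
    have Oe: "Omega_e \<Omega> ?\<tau> j = loc_order ?\<tau> j" if "j \<in> {1..k}" for j
    proof (rule Omega_e_simple_witness[OF U' C'])
      show "\<forall>a\<in>Lw ?\<tau> j. \<forall>b\<in>Lw ?\<tau> j. (a, b) \<in> \<Omega> ?\<tau> j \<longleftrightarrow> a < b"
        using SW tr' that \<open>k \<le> m\<close> unfolding simple_witness_def by auto
    qed
    have "canonical_nice_cycle \<Omega> ?\<tau> k u w"
      by (rule canonical_nice_cycle_relabel[OF permutes_inj[OF perm(1)] permutes_inj[OF perm(2)]
            procs M L norm Oe])
    moreover have "k \<in> {1..min n m}" using \<open>0 < k\<close> \<open>k \<le> n\<close> \<open>k \<le> m\<close> by simp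
    ultimately show False using NC tr' U' unfolding has_canonical_nice_cycle_def by blast
  qed
qed

theorem corollary7p6:
  fixes I :: "nat \<Rightarrow> nat \<Rightarrow> nat \<Rightarrow> 'i set"
    and S :: "nat \<Rightarrow> nat \<Rightarrow> nat \<Rightarrow> 'i letter list set"
    and n m :: nat
  assumes "memory_system I S"
    and "causality S"
    and "data_independence S"
    and "processor_symmetry S"
    and "location_symmetry S"
    and "n \<ge> 1" and "m \<ge> 1"
    and "\<exists>\<Omega>. simple_witness S n m \<Omega> \<and>
           (\<forall>\<tau>\<in>traces_nm S n m. unambiguous \<tau> \<longrightarrow>
              (\<forall>k\<in>{1..min n m}. \<not> has_canonical_nice_cycle \<Omega> \<tau> k))"
  shows "\<forall>\<tau>\<in>traces_nm S n m. seq_consistent \<tau>"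
proof
  obtain \<Omega> where SW: "simple_witness S n m \<Omega>"
    and NC: "\<forall>\<tau>\<in>traces_nm S n m. unambiguous \<tau> \<longrightarrow>
      (\<forall>k\<in>{1..min n m}. \<not> has_canonical_nice_cycle \<Omega> \<tau> k)"
    using assms(8) by blast
  fix \<tau> assume "\<tau> \<in> traces_nm S n m"
  then obtain v where v: "1 \<le> v" "\<tau> \<in> traces S n m v" by (auto simp: traces_nm_def)
  then obtain \<tau>' r where \<tau>': "\<tau>' \<in> traces_nm S n m" "unambiguous \<tau>'" "renaming m v r"
      "\<tau> = map (ren_data r) \<tau>'"
    using data_independenceE[OF assms(1,3,6,7)] by metis
  then obtain v' where v': "1 \<le> v'" "\<tau>' \<in> traces S n m v'" by (auto simp: traces_nm_def)
  have "seq_consistent \<tau>'"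
    using trace_graph_acyclic[OF assms(1,2,4-7) SW NC v'(2,1) \<tau>'(2)]
    by (intro seq_consistent_of_acyclic[OF \<tau>'(2) causal_trace[OF assms(2,6,7) v']])
  moreover have "\<forall>e\<in>set \<tau>'. r (ev_loc e) 0 = 0"
    using trace_events[OF assms(1,6,7) v'] \<tau>'(3) by (auto simp: Ev_def renaming_def)
  ultimately show "seq_consistent \<tau>" unfolding \<tau>'(4) by (rule seq_consistent_ren_data)
qed

end
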